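(* Let $\sigma\subseteq[n]$ be an edge or a triangle on $\gamma_2$. Then there is a triangulation $T(\sigma)\in S(n,2)$ such that $\sigma\in T(\sigma)$ and, for every edge or triangle $\tau\subseteq[n]$ with $\tau\ne\sigma$ such that either $\tau$ does not overlap $\sigma$ in $\mathbb{R}^2$ or $\tau<_3\sigma$, we have $\tau\le_3 T(\sigma)$.
   Context: $\gamma_d=\{(t,t^2,\dots,t^d):t\in\mathbb{R}\}$. Fix $t_1<\dots<t_n$ and the points $\gamma_2(t_i)$, identified with $i\in[n]$; $C(n,2)$ is their convex hull (a convex $n$-gon) and $S(n,2)$ the set of triangulations of $C(n,2)$ with vertices in $[n]$. Simplices (edges, triangles) are subsets of $[n]$ identified with their convex hulls; $\sigma,\tau$ overlap if $\mathrm{conv}(\sigma)\cap\mathrm{conv}(\tau)\supsetneq\mathrm{conv}(\sigma\cap\tau)$. The height function $h_\sigma:\mathrm{conv}(\sigma)\to\mathbb{R}$ gives the last coordinate of the point in the convex hull of the lifted points $\gamma_3(t_i)$, $i\in\sigma$, projecting to $p$. $\sigma<_3\tau$ means $\sigma,\tau$ overlap in $\mathbb{R}^2$ and $h_\sigma\le h_\tau$ on the common domain. For $T\in S(n,2)$, $h_T(p)=h_\rho(p)$ for $p\in\mathrm{conv}(\rho)$, $\rho\in T$, and $\tau\le_3T$ means $h_\tau\le h_T$ on $\mathrm{conv}(\tau)$. *)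

theory Defs
  imports "HOL-Analysis.Analysis"
begin

text \<open>Points on the moment curves; the parameters are given by t :: nat => real,
  the index set [n] is {1..n}.\<close>

definition gamma2 :: "real \<Rightarrow> real \<times> real" where
  "gamma2 s = (s, s^2)"

definition gamma3 :: "real \<Rightarrow> real \<times> real \<times> real" where
  "gamma3 s = (s, s^2, s^3)"

definition cnv :: "(nat \<Rightarrow> real) \<Rightarrow> nat set \<Rightarrow> (real \<times> real) set" where
  "cnv t \<sigma> = convex hull ((\<lambda>i. gamma2 (t i)) ` \<sigma>)"

definition overlap :: "(nat \<Rightarrow> real) \<Rightarrow> nat set \<Rightarrow> nat set \<Rightarrow> bool" where
  "overlap t \<sigma> \<tau> \<longleftrightarrow> cnv t (\<sigma> \<inter> \<tau>) \<subset> cnv t \<sigma> \<inter> cnv t \<tau>"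

definition height :: "(nat \<Rightarrow> real) \<Rightarrow> nat set \<Rightarrow> real \<times> real \<Rightarrow> real" where
  "height t \<sigma> p = (THE z. (fst p, snd p, z) \<in> convex hull ((\<lambda>i. gamma3 (t i)) ` \<sigma>))"

definition below3 :: "(nat \<Rightarrow> real) \<Rightarrow> nat set \<Rightarrow> nat set \<Rightarrow> bool" where
  "below3 t \<sigma> \<tau> \<longleftrightarrow> overlap t \<sigma> \<tau> \<and>
     (\<forall>p \<in> cnv t \<sigma> \<inter> cnv t \<tau>. height t \<sigma> p \<le> height t \<tau> p)"

definition edge_or_triangle :: "nat \<Rightarrow> nat set \<Rightarrow> bool" where
  "edge_or_triangle n \<sigma> \<longleftrightarrow> \<sigma> \<subseteq> {1..n} \<and> (card \<sigma> = 2 \<or> card \<sigma> = 3)"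

definition triangulation :: "nat \<Rightarrow> (nat \<Rightarrow> real) \<Rightarrow> nat set set \<Rightarrow> bool" where
  "triangulation n t T \<longleftrightarrow>
     (\<forall>\<rho>\<in>T. \<rho> \<subseteq> {1..n} \<and> card \<rho> = 3) \<and>
     (\<forall>\<rho>\<in>T. \<forall>\<rho>'\<in>T. \<rho> \<noteq> \<rho>' \<longrightarrow> \<not> overlap t \<rho> \<rho>') \<and>
     (\<Union>\<rho>\<in>T. cnv t \<rho>) = cnv t {1..n}"

text \<open>A simplex belongs to the triangulation (as a simplicial complex) iff it is a
  face of one of its triangles.\<close>
definition in_triang :: "nat set \<Rightarrow> nat set set \<Rightarrow> bool" where
  "in_triang \<sigma> T \<longleftrightarrow> (\<exists>\<rho>\<in>T. \<sigma> \<subseteq> \<rho>)"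

text \<open>tau <=_3 T: h_tau <= h_T on conv(tau), where h_T(p) = h_rho(p) for p in conv(rho).\<close>
definition below3_T :: "(nat \<Rightarrow> real) \<Rightarrow> nat set \<Rightarrow> nat set set \<Rightarrow> bool" where
  "below3_T t \<tau> T \<longleftrightarrow>
     (\<forall>p \<in> cnv t \<tau>. \<forall>\<rho>\<in>T. p \<in> cnv t \<rho> \<longrightarrow> height t \<tau> p \<le> height t \<rho> p)"

end

theory Submission
  imports Defs
begin

text \<open>
  Write a point p of a simplex S as \<open>p = (\<Sum>k\<in>S. l k *\<^sub>R gamma2 (t k))\<close>. When S has at most
  three vertices the weights are unique, and the height of S at p is \<open>\<Sum>k\<in>S. l k * t k ^ 3\<close>.
  For a monic cubic P this differs from \<open>\<Sum>k\<in>S. l k * P (t k)\<close> by an affine function of p,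
  so h_\<tau> \<le> h_\<rho> on common points as soon as P \<le> 0 at the vertices of \<tau> and P \<ge> 0 at
  those of \<rho>. In the same way, (s - t u) (s - t v) shows that the chord {u, v} separates the
  polygon, which gives non-overlap and covering for an explicit fan triangulation T(\<sigma>)
  containing \<sigma> (or a triangle containing the edge \<sigma>).

  Say \<tau> interlaces \<sigma> if x1 < y1 < x2 < y2 for some x1, x2 in \<sigma> and y1, y2 in \<tau>. Then \<tau>
  overlaps \<sigma> and, at the crossing of the edges {x1, x2} and {y1, y2}, lies strictly above it
  (use P with roots t x1, t x2, t y2), so the hypothesis on \<tau> excludes interlacing. For
  every triangle {x, y, z} of T(\<sigma>) a non-interlacing \<tau> fits one of the sign patterns
  of P = (s - t x) (s - t y) (s - t z), (s - t x)^2 (s - t y) or (s - t x) (s - t z) (s - t n),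
  hence \<tau> \<le>_3 T(\<sigma>).
\<close>

section \<open>Convex combinations of points on the parabola\<close>

lemma sum_scaleR_gamma2:
  "(\<Sum>k\<in>S. l k *\<^sub>R gamma2 (s k)) = (\<Sum>k\<in>S. l k * s k, \<Sum>k\<in>S. l k * s k ^ 2)"
  by (simp add: gamma2_def prod_eq_iff fst_sum snd_sum)

lemma sum_scaleR_gamma3:
  "(\<Sum>k\<in>S. l k *\<^sub>R gamma3 (s k)) =
     (\<Sum>k\<in>S. l k * s k, \<Sum>k\<in>S. l k * s k ^ 2, \<Sum>k\<in>S. l k * s k ^ 3)"
  by (simp add: gamma3_def prod_eq_iff fst_sum snd_sum)

lemma mem_convex_hull_inj_image_iff:
  fixes g :: "'i \<Rightarrow> 'a::real_vector"
  assumes "finite S" "inj_on g S"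
  shows "p \<in> convex hull (g ` S) \<longleftrightarrow>
    (\<exists>l. (\<forall>k\<in>S. 0 \<le> l k) \<and> sum l S = 1 \<and> (\<Sum>k\<in>S. l k *\<^sub>R g k) = p)"
proof
  assume "p \<in> convex hull (g ` S)"
  then obtain u where u: "\<forall>x\<in>g ` S. 0 \<le> u x" "sum u (g ` S) = 1" "(\<Sum>x\<in>g ` S. u x *\<^sub>R x) = p"
    using convex_hull_finite[of "g ` S"] assms by auto
  show "\<exists>l. (\<forall>k\<in>S. 0 \<le> l k) \<and> sum l S = 1 \<and> (\<Sum>k\<in>S. l k *\<^sub>R g k) = p"
    using u sum.reindex[OF assms(2), of u] sum.reindex[OF assms(2), of "\<lambda>x. u x *\<^sub>R x"]
    by (intro exI[of _ "u \<circ> g"]) auto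
next
  assume "\<exists>l. (\<forall>k\<in>S. 0 \<le> l k) \<and> sum l S = 1 \<and> (\<Sum>k\<in>S. l k *\<^sub>R g k) = p"
  then obtain l where l: "\<forall>k\<in>S. 0 \<le> l k" "sum l S = 1" "(\<Sum>k\<in>S. l k *\<^sub>R g k) = p"
    by blast
  have "(\<Sum>k\<in>S. l k *\<^sub>R g k) \<in> convex hull (g ` S)"
    by (rule convex_sum) (use assms l in \<open>auto intro: hull_inc\<close>)
  then show "p \<in> convex hull (g ` S)"
    using l by simp
qed

definition bary_weights :: "(nat \<Rightarrow> real) \<Rightarrow> nat set \<Rightarrow> (nat \<Rightarrow> real) \<Rightarrow> real \<times> real \<Rightarrow> bool"
  where "bary_weights t S l p \<longleftrightarrow> (\<forall>k\<in>S. 0 \<le> l k) \<and> sum l S = 1 \<and>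
    (\<Sum>k\<in>S. l k * t k) = fst p \<and> (\<Sum>k\<in>S. l k * t k ^ 2) = snd p"

text \<open>The signed vertical distance from \<open>p\<close> to the line through \<open>gamma2 A\<close> and \<open>gamma2 B\<close>.\<close>
definition above_secant :: "real \<Rightarrow> real \<Rightarrow> real \<times> real \<Rightarrow> real"
  where "above_secant A B p = snd p - (A + B) * fst p + A * B"

lemma above_secant_affine:
  assumes "a + b = 1"
  shows "above_secant A B (a *\<^sub>R x + b *\<^sub>R y) = a * above_secant A B x + b * above_secant A B y"
proof -
  have "a * above_secant A B x + b * above_secant A B y =
      a * snd x + b * snd y - (A + B) * (a * fst x + b * fst y) + (a + b) * (A * B)"
    by (simp add: above_secant_def algebra_simps)
  then show ?thesis
    using assms by (simp add: above_secant_def)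
qed

lemma bary_weights_above_secant:
  assumes "bary_weights t S l p"
  shows "above_secant A B p = (\<Sum>k\<in>S. l k * ((t k - A) * (t k - B)))"
proof -
  have "(\<Sum>k\<in>S. l k * ((t k - A) * (t k - B))) =
      (\<Sum>k\<in>S. l k * t k ^ 2 - (A + B) * (l k * t k) + A * B * l k)"
    by (rule sum.cong) (auto simp: algebra_simps power2_eq_square)
  also have "\<dots> = above_secant A B p"
    using assms
    by (simp add: bary_weights_def above_secant_def sum.distrib sum_subtractf sum_distrib_left[symmetric])
  finally show ?thesis ..
qed

lemma bary_weights_cube:
  assumes "bary_weights t S l p"
  shows "(\<Sum>k\<in>S. l k * t k ^ 3) = (\<Sum>k\<in>S. l k * ((t k - x) * (t k - y) * (t k - z)))
    + (x + y + z) * snd p - (x * y + y * z + z * x) * fst p + x * y * z"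
proof -
  have "(\<Sum>k\<in>S. l k * t k ^ 3) = (\<Sum>k\<in>S. l k * ((t k - x) * (t k - y) * (t k - z))
      + (x + y + z) * (l k * t k ^ 2) - (x * y + y * z + z * x) * (l k * t k) + x * y * z * l k)"
    by (rule sum.cong) (auto simp: algebra_simps power2_eq_square power3_eq_cube)
  then show ?thesis
    using assms
    by (simp add: bary_weights_def sum.distrib sum_subtractf sum_distrib_left[symmetric])
qed

lemma bary_weights_above_parabola:
  assumes "bary_weights t S l p"
  shows "fst p ^ 2 \<le> snd p"
proof -
  have "0 \<le> (\<Sum>k\<in>S. l k * ((t k - fst p) * (t k - fst p)))"
    using assms unfolding bary_weights_def by (intro sum_nonneg) auto
  also have "\<dots> = snd p - fst p ^ 2"
    using bary_weights_above_secant[OF assms, of "fst p" "fst p"]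
    by (simp add: above_secant_def power2_eq_square)
  finally show ?thesis by simp
qed

lemma bary_weights_restrict:
  assumes "bary_weights t S l p" "S' \<subseteq> S" "finite S" "\<forall>k\<in>S - S'. l k = 0"
  shows "bary_weights t S' l p"
proof -
  have "sum f S' = sum f S" if "\<forall>k\<in>S - S'. f k = 0" for f :: "nat \<Rightarrow> real"
    by (rule sum.mono_neutral_left) (use assms that in auto)
  then show ?thesis
    using assms unfolding bary_weights_def by auto
qed

lemma sum_extend_by_zero:
  fixes l f :: "nat \<Rightarrow> real"
  assumes "S \<subseteq> S'" "finite S'"
  shows "(\<Sum>k\<in>S'. (if k \<in> S then l k else 0) * f k) = (\<Sum>k\<in>S. l k * f k)"
proof -
  have "(\<Sum>k\<in>S'. (if k \<in> S then l k else 0) * f k) = (\<Sum>k\<in>S. (if k \<in> S then l k else 0) * f k)"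
    by (rule sum.mono_neutral_right) (use assms in auto)
  then show ?thesis by simp
qed

lemma bary_weights_extend:
  assumes "bary_weights t S l p" "S \<subseteq> S'" "finite S'"
  shows "bary_weights t S' (\<lambda>k. if k \<in> S then l k else 0) p"
  using assms sum_extend_by_zero[OF assms(2,3), of l "\<lambda>_. 1"] sum_extend_by_zero[OF assms(2,3), of l t]
    sum_extend_by_zero[OF assms(2,3), of l "\<lambda>k. t k ^ 2"]
  unfolding bary_weights_def by auto

lemma card_3_sorted:
  fixes S :: "'a::linorder set"
  assumes "card S = 3"
  obtains x y z where "x < y" "y < z" "S = {x, y, z}"
proof -
  obtain xs where xs: "sorted_wrt (<) xs" "set xs = S" "length xs = 3"
    using sorted_list_of_set.finite_set_strict_sorted[of S] assms card.infinite by force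
  then obtain x y z where "xs = [x, y, z]"
    by (auto simp: numeral_3_eq_3 length_Suc_conv)
  then show ?thesis
    using that xs by auto
qed

lemma subset_pair_avoiding:
  fixes X :: "real set"
  assumes "finite X" "card X \<le> 2" "y \<notin> X"
  obtains r1 r2 where "X \<subseteq> {r1, r2}" "r1 \<noteq> y" "r2 \<noteq> y"
proof -
  have "card X = 0 \<or> card X = 1 \<or> card X = 2"
    using assms(2) by auto
  then show ?thesis
  proof (elim disjE)
    assume "card X = 0"
    then show ?thesis using assms(1) that[of "y + 1" "y + 1"] by simp
  next
    assume "card X = 1"
    then obtain a where "X = {a}" by (rule card_1_singletonE)
    then show ?thesis using assms(3) that[of a a] by simp
  next
    assume "card X = 2"
    then obtain a b where "X = {a, b}" by (meson card_2_iff)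
    then show ?thesis using assms(3) that[of a b] by simp
  qed
qed

lemma moments_vanish_imp_zero:
  fixes d t :: "nat \<Rightarrow> real"
  assumes S: "finite S" "card S \<le> 3" "inj_on t S"
    and d: "sum d S = 0" "(\<Sum>j\<in>S. d j * t j) = 0" "(\<Sum>j\<in>S. d j * t j ^ 2) = 0"
    and k: "k \<in> S"
  shows "d k = 0"
proof -
  have "finite (t ` (S - {k}))"
    using S(1) by simp
  moreover have "card (t ` (S - {k})) \<le> 2"
    using card_image_le[of "S - {k}" t] S k by (simp add: card_Diff_singleton)
  moreover have "t k \<notin> t ` (S - {k})"
    using S(3) k by (auto simp: inj_on_def)
  ultimately obtain r1 r2 where r: "t ` (S - {k}) \<subseteq> {r1, r2}" "r1 \<noteq> t k" "r2 \<noteq> t k"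
    by (rule subset_pair_avoiding)
  have "(\<Sum>j\<in>S. d j * ((t j - r1) * (t j - r2))) =
      (\<Sum>j\<in>S. d j * t j ^ 2 - (r1 + r2) * (d j * t j) + r1 * r2 * d j)"
    by (rule sum.cong) (auto simp: algebra_simps power2_eq_square)
  also have "\<dots> = 0"
    using d by (simp add: sum.distrib sum_subtractf sum_distrib_left[symmetric])
  finally have "(\<Sum>j\<in>S. d j * ((t j - r1) * (t j - r2))) = 0" .
  moreover have "(\<Sum>j\<in>S - {k}. d j * ((t j - r1) * (t j - r2))) = 0"
    using r(1) by (intro sum.neutral) auto
  ultimately have "d k * ((t k - r1) * (t k - r2)) = 0"
    using sum.remove[OF S(1) k, of "\<lambda>j. d j * ((t j - r1) * (t j - r2))"] by linarith
  then show ?thesis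
    using r by simp
qed

text \<open>Walking from \<open>y \<in> A\<close> towards \<open>x\<close>, one can only leave \<open>A\<close> after \<open>f\<close> has become positive.\<close>
lemma mem_convex_if_affine_nonpos:
  fixes f :: "'a::real_vector \<Rightarrow> real"
  assumes affine: "\<And>a b u v. a + b = 1 \<Longrightarrow> f (a *\<^sub>R u + b *\<^sub>R v) = a * f u + b * f v"
    and A: "convex A" "y \<in> A" and fy: "f y \<le> 0" and fx: "0 \<le> f x"
    and zeros: "\<And>z. z \<in> closed_segment y x \<Longrightarrow> f z = 0 \<Longrightarrow> z \<in> A"
    and p: "p \<in> closed_segment y x" "f p \<le> 0"
  shows "p \<in> A"
proof -
  obtain s where s: "0 \<le> s" "s \<le> 1" "p = (1 - s) *\<^sub>R y + s *\<^sub>R x"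
    using p(1) by (auto simp: in_segment)
  have fp_eq: "f p = (1 - s) * f y + s * f x"
    using affine[of "1 - s" s y x] s(3) by simp
  then have fp: "(1 - s) * f y + s * f x \<le> 0"
    using p(2) by simp
  show ?thesis
  proof (cases "f y = f x")
    case True
    then have "f p = 0"
      using fy fx fp_eq by simp
    then show ?thesis using zeros p(1) by blast
  next
    case False
    define \<theta> where "\<theta> = f y / (f y - f x)"
    have fyx: "f y < f x" using False fy fx by simp
    have \<theta>: "0 \<le> \<theta>" "\<theta> \<le> 1" "s \<le> \<theta>"
      using fy fx fp fyx by (auto simp: \<theta>_def field_simps)
    define z where "z = (1 - \<theta>) *\<^sub>R y + \<theta> *\<^sub>R x"
    have "f z = (1 - \<theta>) * f y + \<theta> * f x"
      unfolding z_def by (rule affine) simp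
    also have "\<dots> = 0"
      using fyx by (simp add: \<theta>_def field_simps)
    finally have "z \<in> A"
      using zeros \<theta>(1,2) by (auto simp: z_def in_segment)
    show ?thesis
    proof (cases "\<theta> = 0")
      case True
      then show ?thesis using s \<theta> A(2) by simp
    next
      case False
      then have "p = (1 - s / \<theta>) *\<^sub>R y + (s / \<theta>) *\<^sub>R z"
        using s(3) by (simp add: z_def algebra_simps)
      moreover have "(1 - s / \<theta>) *\<^sub>R y + (s / \<theta>) *\<^sub>R z \<in> A"
        using False \<theta> s by (intro convexD[OF A(1) A(2) \<open>z \<in> A\<close>]) auto
      ultimately show ?thesis by simp
    qed
  qed
qed

lemma mem_convex_hull_Un_closed_segment:
  fixes A B :: "'a::euclidean_space set"
  assumes "convex A" "convex B" "A \<noteq> {}" "B \<noteq> {}" "p \<in> convex hull (A \<union> B)"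
  obtains y x where "y \<in> A" "x \<in> B" "p \<in> closed_segment y x"
proof -
  obtain a b y x where ab: "0 \<le> a" "0 \<le> b" "a + b = 1" "p = a *\<^sub>R y + b *\<^sub>R x" and yx: "y \<in> A" "x \<in> B"
    using assms(5) unfolding convex_hull_union_two[OF assms(1,3,2,4)] by blast
  then have "p \<in> closed_segment y x"
    unfolding in_segment by (intro exI[of _ b]) (auto simp: eq_diff_eq [symmetric])
  with yx that show ?thesis
    by blast
qed

lemma cnv_mono: "A \<subseteq> B \<Longrightarrow> cnv t A \<subseteq> cnv t B"
  unfolding cnv_def by (intro hull_mono image_mono)

lemma cnv_subset_Union_of_subset: "X \<subseteq> \<rho> \<Longrightarrow> \<rho> \<in> T \<Longrightarrow> cnv t X \<subseteq> \<Union> (cnv t ` T)"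
  using cnv_mono by blast

lemma convex_cnv: "convex (cnv t A)"
  unfolding cnv_def by (rule convex_convex_hull)

lemma overlap_iff: "overlap t \<sigma> \<tau> \<longleftrightarrow> \<not> cnv t \<sigma> \<inter> cnv t \<tau> \<subseteq> cnv t (\<sigma> \<inter> \<tau>)"
  using cnv_mono[of "\<sigma> \<inter> \<tau>" \<sigma> t] cnv_mono[of "\<sigma> \<inter> \<tau>" \<tau> t] unfolding overlap_def by blast

lemma overlap_commute: "overlap t \<sigma> \<tau> \<longleftrightarrow> overlap t \<tau> \<sigma>"
  unfolding overlap_def by (simp add: Int_commute)

section \<open>The triangulation T(\<sigma>)\<close>

text \<open>The chord {u, v} of the polygon has \<open>R\<close> on its outer and \<open>R'\<close> on its inner side.\<close>
definition chord_separated :: "nat \<Rightarrow> nat set \<Rightarrow> nat set \<Rightarrow> bool"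
  where "chord_separated n R R' \<longleftrightarrow> (\<exists>u v. 1 \<le> u \<and> u < v \<and> v \<le> n \<and>
    (\<forall>k\<in>R. k \<le> u \<or> v \<le> k) \<and> (\<forall>k\<in>R'. u \<le> k \<and> k \<le> v))"

definition fan :: "nat \<Rightarrow> nat \<Rightarrow> nat \<Rightarrow> nat set set"
  where "fan u v m = {{i, Suc i, m} | i. u \<le> i \<and> Suc i \<le> v}"

text \<open>Inside the chord {a, c}: the triangle
  itself and the polygons on a..b and b..c, fanned from b and c. Outside: the polygon fanned
  from n, with the triangle {a, c, n} between the two fans.\<close>
definition inner_triangles :: "nat \<Rightarrow> nat \<Rightarrow> nat \<Rightarrow> nat set set"
  where "inner_triangles a b c = {{a, b, c}} \<union> fan a (b - 1) b \<union> fan b (c - 1) c"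

definition outer_triangles :: "nat \<Rightarrow> nat \<Rightarrow> nat \<Rightarrow> nat set set"
  where "outer_triangles n a c = fan 1 a n \<union> (if c < n then {{a, c, n}} else {}) \<union> fan c (n - 1) n"

definition fan_triangulation :: "nat \<Rightarrow> nat \<Rightarrow> nat \<Rightarrow> nat \<Rightarrow> nat set set"
  where "fan_triangulation n a b c = inner_triangles a b c \<union> outer_triangles n a c"

lemma mem_fan_iff: "R \<in> fan u v m \<longleftrightarrow> (\<exists>i. R = {i, Suc i, m} \<and> u \<le> i \<and> Suc i \<le> v)"
  unfolding fan_def by blast

lemma mem_inner_triangles_iff:
  "R \<in> inner_triangles a b c \<longleftrightarrow> R = {a, b, c} \<or> R \<in> fan a (b - 1) b \<or> R \<in> fan b (c - 1) c"
  unfolding inner_triangles_def by blast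

lemma mem_outer_triangles_iff:
  "R \<in> outer_triangles n a c \<longleftrightarrow> R \<in> fan 1 a n \<or> (c < n \<and> R = {a, c, n}) \<or> R \<in> fan c (n - 1) n"
  unfolding outer_triangles_def by simp

lemma fan_triangulation_subset_card:
  assumes "1 \<le> a" "a < b" "b < c" "c \<le> n" "R \<in> fan_triangulation n a b c"
  shows "R \<subseteq> {1..n}" "card R = 3"
  using assms(5) assms(1-4)
  unfolding fan_triangulation_def Un_iff mem_inner_triangles_iff mem_outer_triangles_iff mem_fan_iff by auto

lemma chord_separatedI:
  "1 \<le> u \<Longrightarrow> u < v \<Longrightarrow> v \<le> n \<Longrightarrow> \<forall>k\<in>R. k \<le> u \<or> v \<le> k \<Longrightarrow> \<forall>k\<in>R'. u \<le> k \<and> k \<le> v \<Longrightarrow>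
    chord_separated n R R'"
  unfolding chord_separated_def by blast

lemma fan_chord_separated:
  assumes "R \<in> fan u v m" "R' \<in> fan u v m" "R \<noteq> R'" "1 \<le> u" "v < m" "m \<le> n"
  shows "chord_separated n R R' \<or> chord_separated n R' R"
proof -
  obtain i where i: "R = {i, Suc i, m}" "u \<le> i" "Suc i \<le> v"
    using assms(1) mem_fan_iff by blast
  obtain j where j: "R' = {j, Suc j, m}" "u \<le> j" "Suc j \<le> v"
    using assms(2) mem_fan_iff by blast
  consider "i < j" | "j < i"
    using i j assms(3) by fastforce
  then show ?thesis
  proof cases
    case 1
    then have "chord_separated n R R'"
      by (intro chord_separatedI[of "Suc i" m]) (use i j assms in auto)
    then show ?thesis ..
  next
    case 2
    then have "chord_separated n R' R"
      by (intro chord_separatedI[of "Suc j" m]) (use i j assms in auto)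
    then show ?thesis ..
  qed
qed

lemma fan_chord_separated_right:
  assumes "R \<in> fan u v m" "1 \<le> u" "v < m" "m \<le> n" "\<forall>k\<in>R'. v \<le> k \<and> k \<le> m"
  shows "chord_separated n R R'"
proof -
  obtain i where i: "R = {i, Suc i, m}" "u \<le> i" "Suc i \<le> v"
    using assms(1) mem_fan_iff by blast
  show ?thesis
    by (rule chord_separatedI[of "Suc i" m]) (use i assms in auto)
qed

lemma inner_triangles_chord_separated:
  assumes abc: "1 \<le> a" "a < b" "b < c" "c \<le> n"
    and R: "R \<in> inner_triangles a b c" "R' \<in> inner_triangles a b c" "R \<noteq> R'"
  shows "chord_separated n R R' \<or> chord_separated n R' R"
proof -
  have ab: "chord_separated n Z W" if "Z = {a, b, c} \<or> Z \<in> fan b (c - 1) c" "W \<in> fan a (b - 1) b" for Z W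
    by (rule chord_separatedI[of a b]) (use abc that in \<open>auto simp: mem_fan_iff\<close>)
  have bc: "chord_separated n Z W" if "Z = {a, b, c}" "W \<in> fan b (c - 1) c" for Z W
    by (rule chord_separatedI[of b c]) (use abc that in \<open>auto simp: mem_fan_iff\<close>)
  have fan_ab: "chord_separated n Z W \<or> chord_separated n W Z"
    if "Z \<in> fan a (b - 1) b" "W \<in> fan a (b - 1) b" "Z \<noteq> W" for Z W
    by (rule fan_chord_separated[OF that]) (use abc in auto)
  have fan_bc: "chord_separated n Z W \<or> chord_separated n W Z"
    if "Z \<in> fan b (c - 1) c" "W \<in> fan b (c - 1) c" "Z \<noteq> W" for Z W
    by (rule fan_chord_separated[OF that]) (use abc in auto)
  show ?thesis
    using R unfolding mem_inner_triangles_iff by (elim disjE) (simp_all add: ab bc fan_ab fan_bc)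
qed

lemma outer_triangles_chord_separated:
  assumes abc: "1 \<le> a" "a < c" "c \<le> n"
    and R: "R \<in> outer_triangles n a c" "R' \<in> outer_triangles n a c" "R \<noteq> R'"
  shows "chord_separated n R R' \<or> chord_separated n R' R"
proof -
  have left: "chord_separated n Z W" if "Z \<in> fan 1 a n" "(c < n \<and> W = {a, c, n}) \<or> W \<in> fan c (n - 1) n" for Z W
    by (rule fan_chord_separated_right[OF that(1)]) (use abc that(2) in \<open>auto simp: mem_fan_iff\<close>)
  have right: "chord_separated n Z W" if "Z = {a, c, n}" "W \<in> fan c (n - 1) n" for Z W
    by (rule chord_separatedI[of c n]) (use abc that in \<open>auto simp: mem_fan_iff\<close>)
  have fan_an: "chord_separated n Z W \<or> chord_separated n W Z"
    if "Z \<in> fan 1 a n" "W \<in> fan 1 a n" "Z \<noteq> W" for Z W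
    by (rule fan_chord_separated[OF that]) (use abc in auto)
  have fan_cn: "chord_separated n Z W \<or> chord_separated n W Z"
    if "Z \<in> fan c (n - 1) n" "W \<in> fan c (n - 1) n" "Z \<noteq> W" for Z W
    by (rule fan_chord_separated[OF that]) (use abc in auto)
  show ?thesis
    using R unfolding mem_outer_triangles_iff by (elim disjE conjE) (simp_all add: left right fan_an fan_cn)
qed

lemma outer_inner_chord_separated:
  assumes abc: "1 \<le> a" "a < b" "b < c" "c \<le> n"
    and R: "R \<in> outer_triangles n a c" and R': "R' \<in> inner_triangles a b c"
  shows "chord_separated n R R'"
proof (rule chord_separatedI[of a c])
  show "\<forall>k\<in>R. k \<le> a \<or> c \<le> k"
    using R abc unfolding mem_outer_triangles_iff mem_fan_iff by auto
  show "\<forall>k\<in>R'. a \<le> k \<and> k \<le> c"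
    using R' abc unfolding mem_inner_triangles_iff mem_fan_iff by auto
qed (use abc in auto)

lemma fan_triangulation_chord_separated:
  assumes abc: "1 \<le> a" "a < b" "b < c" "c \<le> n"
    and R: "R \<in> fan_triangulation n a b c" "R' \<in> fan_triangulation n a b c" "R \<noteq> R'"
  shows "chord_separated n R R' \<or> chord_separated n R' R"
proof (cases "R \<in> inner_triangles a b c")
  case True
  then show ?thesis
    using R(2) inner_triangles_chord_separated[OF abc True _ R(3)] outer_inner_chord_separated[OF abc _ True]
    unfolding fan_triangulation_def by blast
next
  case False
  then have outer: "R \<in> outer_triangles n a c"
    using R(1) unfolding fan_triangulation_def by blast
  show ?thesis
  proof (cases "R' \<in> inner_triangles a b c")
    case True
    then show ?thesis
      using outer_inner_chord_separated[OF abc outer] by blast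
  next
    case False
    then have "R' \<in> outer_triangles n a c"
      using R(2) unfolding fan_triangulation_def by blast
    then show ?thesis
      using outer_triangles_chord_separated[OF abc(1) _ abc(4) outer _ R(3)] abc(2,3) by simp
  qed
qed

text \<open>An edge {y1, y2} of \<tau> crosses an edge {x1, x2} of \<sigma> and ends to its right.\<close>
definition interlaces :: "nat set \<Rightarrow> nat set \<Rightarrow> bool"
  where "interlaces \<sigma> \<tau> \<longleftrightarrow> (\<exists>x1\<in>\<sigma>. \<exists>x2\<in>\<sigma>. \<exists>y1\<in>\<tau>. \<exists>y2\<in>\<tau>. x1 < y1 \<and> y1 < x2 \<and> x2 < y2)"

lemma interlaces_transfer:
  assumes "interlaces \<rho> \<tau>" "\<tau> \<subseteq> {1..n}"
    and "\<And>x1 x2. x1 \<in> \<rho> \<Longrightarrow> x2 \<in> \<rho> \<Longrightarrow> Suc x1 < x2 \<Longrightarrow> x2 < n \<Longrightarrow> x2 \<in> \<sigma> \<and> (\<exists>x\<in>\<sigma>. x \<le> x1)"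
  shows "interlaces \<sigma> \<tau>"
proof -
  obtain x1 x2 y1 y2 where x: "x1 \<in> \<rho>" "x2 \<in> \<rho>" and y: "y1 \<in> \<tau>" "y2 \<in> \<tau>"
    and ord: "x1 < y1" "y1 < x2" "x2 < y2"
    using assms(1) unfolding interlaces_def by blast
  have "Suc x1 < x2" "x2 < n"
    using ord y(2) assms(2) by auto
  then obtain x where "x2 \<in> \<sigma>" "x \<in> \<sigma>" "x \<le> x1"
    using assms(3)[OF x] by blast
  then show ?thesis
    unfolding interlaces_def using y ord by (meson le_less_trans)
qed

lemma not_interlaces_triangle_cases:
  assumes "x < y" "y < z" "\<not> interlaces {x, y, z} \<tau>"
  obtains (left) "\<forall>k\<in>\<tau>. k \<le> y" | (outside) "\<forall>k\<in>\<tau>. k \<le> x \<or> z \<le> k"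
    | (middle) "\<forall>k\<in>\<tau>. k \<le> x \<or> y \<le> k \<and> k \<le> z"
proof -
  consider "\<exists>k\<in>\<tau>. x < k \<and> k < y" | "\<exists>k\<in>\<tau>. z < k" | "\<forall>k\<in>\<tau>. k \<le> x \<or> y \<le> k \<and> k \<le> z"
    by force
  then show ?thesis
  proof cases
    case 1
    then show ?thesis
      using assms(3) that(1) unfolding interlaces_def by (meson insertCI not_le)
  next
    case 2
    then show ?thesis
      using assms that(2) unfolding interlaces_def by (meson insertCI not_le)
  qed (use that(3) in blast)
qed

lemma interlaces_of_mem_fan_triangulation:
  assumes "R \<in> fan_triangulation n a b c" "a < b" "b < c" "\<tau> \<subseteq> {1..n}" "interlaces R \<tau>"
  shows "interlaces {a, b, c} \<tau>"
  using assms(5,4)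
proof (rule interlaces_transfer)
  fix x1 x2
  assume x: "x1 \<in> R" "x2 \<in> R" "Suc x1 < x2" "x2 < n"
  from assms(1) show "x2 \<in> {a, b, c} \<and> (\<exists>x\<in>{a, b, c}. x \<le> x1)"
    unfolding fan_triangulation_def Un_iff mem_inner_triangles_iff mem_outer_triangles_iff mem_fan_iff
    by (elim disjE exE conjE) (use x assms(2,3) in auto)
qed

lemma edge_or_triangle_in_triangle:
  assumes "3 \<le> n" "edge_or_triangle n \<sigma>"
  obtains a b c where "1 \<le> a" "a < b" "b < c" "c \<le> n" "\<sigma> \<subseteq> {a, b, c}"
    "\<And>\<tau>. \<tau> \<subseteq> {1..n} \<Longrightarrow> interlaces {a, b, c} \<tau> \<Longrightarrow> interlaces \<sigma> \<tau>"
proof -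
  have \<sigma>: "\<sigma> \<subseteq> {1..n}" "card \<sigma> = 2 \<or> card \<sigma> = 3"
    using assms(2) unfolding edge_or_triangle_def by auto
  from \<sigma>(2) show ?thesis
  proof
    assume "card \<sigma> = 3"
    then obtain a b c where "a < b" "b < c" "\<sigma> = {a, b, c}"
      by (rule card_3_sorted)
    then show ?thesis
      using that \<sigma>(1) by auto
  next
    assume "card \<sigma> = 2"
    then obtain a b where ab: "a < b" "\<sigma> = {a, b}"
      by (metis card_2_iff insert_commute linorder_neqE_nat)
    have ab_n: "1 \<le> a" "b \<le> n"
      using \<sigma>(1) ab by auto
    consider (gap) "Suc a < b" | (inner) "b = Suc a" "b < n" | (last) "b = Suc a" "b = n"
      using ab ab_n by linarith
    then show ?thesis
    proof cases
      case gap
      show ?thesis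
      proof (rule that[of a "Suc a" b])
        show "interlaces \<sigma> \<tau>" if "\<tau> \<subseteq> {1..n}" "interlaces {a, Suc a, b} \<tau>" for \<tau>
          using that(2,1) by (rule interlaces_transfer) (use ab in auto)
      qed (use ab ab_n gap in auto)
    next
      case inner
      show ?thesis
      proof (rule that[of a b n])
        show "interlaces \<sigma> \<tau>" if "\<tau> \<subseteq> {1..n}" "interlaces {a, b, n} \<tau>" for \<tau>
          using that(2,1) by (rule interlaces_transfer) (use ab inner in auto)
      qed (use ab ab_n inner in auto)
    next
      case last
      show ?thesis
      proof (rule that[of "n - 2" "n - 1" n])
        show "interlaces \<sigma> \<tau>" if "\<tau> \<subseteq> {1..n}" "interlaces {n - 2, n - 1, n} \<tau>" for \<tau>
          using that(2,1) by (rule interlaces_transfer) (use assms(1) in auto)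
      qed (use ab assms(1) last in auto)
    qed
  qed
qed

section \<open>Heights, chords and covering for increasing parameters\<close>

context
  fixes n :: nat and t :: "nat \<Rightarrow> real"
  assumes mono: "strict_mono_on {1..n} t"
begin

lemma inj_on_t: "S \<subseteq> {1..n} \<Longrightarrow> inj_on t S"
  using strict_mono_on_imp_inj_on[OF mono] inj_on_subset by blast

lemma mem_cnv_iff:
  assumes "S \<subseteq> {1..n}"
  shows "p \<in> cnv t S \<longleftrightarrow> (\<exists>l. bary_weights t S l p)"
proof -
  have "finite S"
    using assms finite_subset by blast
  moreover have "inj_on (\<lambda>i. gamma2 (t i)) S"
    using inj_on_t[OF assms] by (auto simp: inj_on_def gamma2_def)
  ultimately show ?thesis
    by (simp add: cnv_def mem_convex_hull_inj_image_iff sum_scaleR_gamma2 bary_weights_def prod_eq_iff)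
qed

lemma bary_weights_unique:
  assumes "S \<subseteq> {1..n}" "card S \<le> 3" "bary_weights t S l p" "bary_weights t S m p" "k \<in> S"
  shows "l k = m k"
proof -
  have "l k - m k = 0"
    by (rule moments_vanish_imp_zero[where S = S and t = t])
      (use assms finite_subset inj_on_t in \<open>auto simp: bary_weights_def sum_subtractf left_diff_distrib\<close>)
  then show ?thesis by simp
qed

lemma height_eq_sum:
  assumes S: "S \<subseteq> {1..n}" "card S \<le> 3" and l: "bary_weights t S l p"
  shows "height t S p = (\<Sum>k\<in>S. l k * t k ^ 3)"
proof -
  have "finite S"
    using S finite_subset by blast
  moreover have "inj_on (\<lambda>i. gamma3 (t i)) S"
    using inj_on_t[OF S(1)] by (auto simp: inj_on_def gamma3_def)
  ultimately have lift: "(fst p, snd p, z) \<in> convex hull ((\<lambda>i. gamma3 (t i)) ` S) \<longleftrightarrow>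
      (\<exists>m. bary_weights t S m p \<and> (\<Sum>k\<in>S. m k * t k ^ 3) = z)" for z
    by (simp add: mem_convex_hull_inj_image_iff sum_scaleR_gamma3 bary_weights_def)
  show ?thesis
    unfolding height_def
  proof (rule the_equality)
    show "(fst p, snd p, \<Sum>k\<in>S. l k * t k ^ 3) \<in> convex hull (\<lambda>i. gamma3 (t i)) ` S"
      using lift l by blast
  next
    fix z
    assume "(fst p, snd p, z) \<in> convex hull (\<lambda>i. gamma3 (t i)) ` S"
    then obtain m where m: "bary_weights t S m p" "(\<Sum>k\<in>S. m k * t k ^ 3) = z"
      using lift by blast
    have "m k = l k" if "k \<in> S" for k
      by (rule bary_weights_unique[OF S m(1) l that])
    then show "z = (\<Sum>k\<in>S. l k * t k ^ 3)"
      using m(2) by (metis (no_types, lifting) sum.cong)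
  qed
qed

lemma height_face:
  assumes X: "X \<subseteq> S" and S: "S \<subseteq> {1..n}" "card S \<le> 3" and p: "p \<in> cnv t X"
  shows "height t S p = height t X p"
proof -
  have fin: "finite S"
    using S finite_subset by blast
  have X': "X \<subseteq> {1..n}" "card X \<le> 3"
    using X S card_mono[OF fin X] by auto
  obtain l where l: "bary_weights t X l p"
    using p mem_cnv_iff[OF X'(1)] by blast
  have "height t S p = (\<Sum>k\<in>S. (if k \<in> X then l k else 0) * t k ^ 3)"
    by (rule height_eq_sum[OF S bary_weights_extend[OF l X fin]])
  also have "\<dots> = height t X p"
    using height_eq_sum[OF X' l] sum_extend_by_zero[OF X fin] by simp
  finally show ?thesis .
qed

lemma cnv_Int:
  assumes S: "X \<union> Y \<subseteq> {1..n}" "card (X \<union> Y) \<le> 3"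
  shows "cnv t X \<inter> cnv t Y = cnv t (X \<inter> Y)"
proof
  show "cnv t (X \<inter> Y) \<subseteq> cnv t X \<inter> cnv t Y"
    using cnv_mono by blast
  show "cnv t X \<inter> cnv t Y \<subseteq> cnv t (X \<inter> Y)"
  proof
    fix p
    assume p: "p \<in> cnv t X \<inter> cnv t Y"
    have fin: "finite (X \<union> Y)"
      using S finite_subset by blast
    obtain l where l: "bary_weights t X l p"
      using p mem_cnv_iff[of X] S by blast
    obtain m where m: "bary_weights t Y m p"
      using p mem_cnv_iff[of Y] S by blast
    have eq: "(if k \<in> X then l k else 0) = (if k \<in> Y then m k else 0)" if "k \<in> X \<union> Y" for k
      by (rule bary_weights_unique[OF S bary_weights_extend[OF l _ fin] bary_weights_extend[OF m _ fin] that])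
        auto
    have "l k = 0" if "k \<in> X - X \<inter> Y" for k
      using eq[of k] that by auto
    then have "bary_weights t (X \<inter> Y) l p"
      by (intro bary_weights_restrict[OF l]) (use fin in auto)
    then show "p \<in> cnv t (X \<inter> Y)"
      using mem_cnv_iff[of "X \<inter> Y"] S by blast
  qed
qed

lemma height_le_if_cubic_sign:
  assumes \<tau>: "\<tau> \<subseteq> {1..n}" "card \<tau> \<le> 3" and \<rho>: "\<rho> \<subseteq> {1..n}" "card \<rho> \<le> 3"
    and p: "p \<in> cnv t \<tau>" "p \<in> cnv t \<rho>"
    and below: "\<forall>k\<in>\<tau>. (t k - x) * (t k - y) * (t k - z) \<le> 0"
    and above: "\<forall>k\<in>\<rho>. 0 \<le> (t k - x) * (t k - y) * (t k - z)"
  shows "height t \<tau> p \<le> height t \<rho> p"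
proof -
  obtain l where l: "bary_weights t \<tau> l p"
    using p(1) mem_cnv_iff[OF \<tau>(1)] by blast
  obtain m where m: "bary_weights t \<rho> m p"
    using p(2) mem_cnv_iff[OF \<rho>(1)] by blast
  have "(\<Sum>k\<in>\<tau>. l k * ((t k - x) * (t k - y) * (t k - z))) \<le> 0"
    using l below unfolding bary_weights_def by (intro sum_nonpos) (simp add: mult_nonneg_nonpos)
  moreover have "0 \<le> (\<Sum>k\<in>\<rho>. m k * ((t k - x) * (t k - y) * (t k - z)))"
    using m above unfolding bary_weights_def by (intro sum_nonneg) simp
  ultimately show ?thesis
    unfolding height_eq_sum[OF \<tau> l] height_eq_sum[OF \<rho> m]
      bary_weights_cube[OF l, of x y z] bary_weights_cube[OF m, of x y z]
    by linarith
qed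

lemma secant_factor_nonpos:
  assumes "u \<in> {1..n}" "v \<in> {1..n}" "k \<in> {1..n}" "u \<le> k" "k \<le> v"
  shows "(t k - t u) * (t k - t v) \<le> 0"
  using strict_mono_on_leD[OF mono] assms by (intro mult_nonneg_nonpos) auto

lemma secant_factor_nonneg:
  assumes "u \<in> {1..n}" "v \<in> {1..n}" "k \<in> {1..n}" "u \<le> v" "k \<le> u \<or> v \<le> k"
  shows "0 \<le> (t k - t u) * (t k - t v)"
proof -
  have "t u \<le> t v"
    using strict_mono_on_leD[OF mono] assms by blast
  from assms(5) show ?thesis
  proof
    assume "k \<le> u"
    then have "t k \<le> t u"
      using strict_mono_on_leD[OF mono] assms(1,3) by blast
    with \<open>t u \<le> t v\<close> show ?thesis
      by (intro mult_nonpos_nonpos) auto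
  next
    assume "v \<le> k"
    then have "t v \<le> t k"
      using strict_mono_on_leD[OF mono] assms(2,3) by blast
    with \<open>t u \<le> t v\<close> show ?thesis
      by (intro mult_nonneg_nonneg) auto
  qed
qed

lemma above_secant_nonpos:
  assumes "S \<subseteq> {1..n}" "p \<in> cnv t S" "\<forall>k\<in>S. (t k - A) * (t k - B) \<le> 0"
  shows "above_secant A B p \<le> 0"
proof -
  obtain l where l: "bary_weights t S l p"
    using assms mem_cnv_iff by blast
  then show ?thesis
    using assms(3) unfolding bary_weights_above_secant[OF l] bary_weights_def
    by (intro sum_nonpos) (simp add: mult_nonneg_nonpos)
qed

lemma above_secant_nonneg:
  assumes "S \<subseteq> {1..n}" "p \<in> cnv t S" "\<forall>k\<in>S. 0 \<le> (t k - A) * (t k - B)"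
  shows "0 \<le> above_secant A B p"
proof -
  obtain l where l: "bary_weights t S l p"
    using assms mem_cnv_iff by blast
  then show ?thesis
    using assms(3) unfolding bary_weights_above_secant[OF l] bary_weights_def
    by (intro sum_nonneg) simp
qed

text \<open>The polygon lies above the parabola, so on the secant line only the chord remains.\<close>
lemma mem_cnv_pair_if_above_secant_eq_0:
  assumes uv: "u \<in> {1..n}" "v \<in> {1..n}" "u < v"
    and p: "S \<subseteq> {1..n}" "p \<in> cnv t S" "above_secant (t u) (t v) p = 0"
  shows "p \<in> cnv t {u, v}"
proof -
  define A B x where "A = t u" and "B = t v" and "x = fst p"
  have AB: "A < B"
    using strict_mono_onD[OF mono] uv by (simp add: A_def B_def)
  have snd_p: "snd p = (A + B) * x - A * B"
    using p(3) by (simp add: above_secant_def A_def B_def x_def)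
  obtain l where "bary_weights t S l p"
    using p mem_cnv_iff by blast
  then have "x ^ 2 \<le> snd p"
    unfolding x_def by (rule bary_weights_above_parabola)
  then have "(x - A) * (x - B) \<le> 0"
    by (simp add: snd_p algebra_simps power2_eq_square)
  then have x: "A \<le> x" "x \<le> B"
    using AB by (auto simp: mult_le_0_iff)
  define m where "m k = (if k = u then (B - x) / (B - A) else (x - A) / (B - A))" for k
  have "m u + m v = 1" "m u * A + m v * B = x" "m u * A ^ 2 + m v * B ^ 2 = snd p"
    using AB uv(3) unfolding m_def snd_p
    by (simp_all add: divide_simps) (simp_all add: algebra_simps power2_eq_square)
  moreover have "0 \<le> m u" "0 \<le> m v"
    using AB x uv(3) unfolding m_def by simp_all
  ultimately have "bary_weights t {u, v} m p"
    using uv(3) unfolding bary_weights_def by (simp add: A_def [symmetric] B_def [symmetric] x_def [symmetric])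
  then show ?thesis
    using mem_cnv_iff uv by auto
qed

lemma mem_cnv_Int_pair_if_above_secant_eq_0:
  assumes uv: "u \<in> {1..n}" "v \<in> {1..n}"
    and p: "S \<subseteq> {1..n}" "p \<in> cnv t S" "above_secant (t u) (t v) p = 0"
    and sign: "(\<forall>k\<in>S. 0 \<le> (t k - t u) * (t k - t v)) \<or> (\<forall>k\<in>S. (t k - t u) * (t k - t v) \<le> 0)"
  shows "p \<in> cnv t (S \<inter> {u, v})"
proof -
  define q where "q k = (t k - t u) * (t k - t v)" for k
  obtain l where l: "bary_weights t S l p"
    using p mem_cnv_iff by blast
  have fin: "finite S"
    using p(1) finite_subset by blast
  have l_nonneg: "\<forall>k\<in>S. 0 \<le> l k"
    using l by (simp add: bary_weights_def)
  have sum0: "(\<Sum>k\<in>S. l k * q k) = 0"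
    using bary_weights_above_secant[OF l] p(3) by (simp add: q_def)
  have terms: "\<forall>k\<in>S. l k * q k = 0"
    using sign
  proof
    assume "\<forall>k\<in>S. 0 \<le> (t k - t u) * (t k - t v)"
    then have "0 \<le> l k * q k" if "k \<in> S" for k
      using l_nonneg that by (simp add: q_def)
    then show ?thesis
      using sum_nonneg_eq_0_iff[OF fin, of "\<lambda>k. l k * q k"] sum0 by simp
  next
    assume "\<forall>k\<in>S. (t k - t u) * (t k - t v) \<le> 0"
    then have "0 \<le> - (l k * q k)" if "k \<in> S" for k
      using l_nonneg that by (simp add: q_def mult_nonneg_nonpos)
    moreover have "(\<Sum>k\<in>S. - (l k * q k)) = 0"
      using sum0 by (simp add: sum_negf)
    ultimately show ?thesis
      using sum_nonneg_eq_0_iff[OF fin, of "\<lambda>k. - (l k * q k)"] by simp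
  qed
  have "l k = 0" if k: "k \<in> S - S \<inter> {u, v}" for k
  proof -
    have "k \<in> {1..n}" "k \<noteq> u" "k \<noteq> v"
      using k p(1) by auto
    then have "q k \<noteq> 0"
      using strict_mono_on_eq[OF mono] uv by (auto simp: q_def)
    then show ?thesis
      using terms k by auto
  qed
  then have "bary_weights t (S \<inter> {u, v}) l p"
    by (intro bary_weights_restrict[OF l _ fin]) auto
  then show ?thesis
    using mem_cnv_iff p(1) by blast
qed

lemma not_overlap_if_chord_separated:
  assumes "chord_separated n R R'" "R \<subseteq> {1..n}" "R' \<subseteq> {1..n}"
  shows "\<not> overlap t R R'"
proof -
  obtain u v where uv: "1 \<le> u" "u < v" "v \<le> n"
    and R: "\<forall>k\<in>R. k \<le> u \<or> v \<le> k" and R': "\<forall>k\<in>R'. u \<le> k \<and> k \<le> v"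
    using assms(1) unfolding chord_separated_def by blast
  have uvn: "u \<in> {1..n}" "v \<in> {1..n}"
    using uv by auto
  have R_sign: "\<forall>k\<in>R. 0 \<le> (t k - t u) * (t k - t v)"
    using secant_factor_nonneg[OF uvn] R assms(2) uv(2) by auto
  have R'_sign: "\<forall>k\<in>R'. (t k - t u) * (t k - t v) \<le> 0"
    using secant_factor_nonpos[OF uvn] R' assms(3) by auto
  have "cnv t R \<inter> cnv t R' \<subseteq> cnv t (R \<inter> R')"
  proof
    fix p
    assume "p \<in> cnv t R \<inter> cnv t R'"
    then have p: "p \<in> cnv t R" "p \<in> cnv t R'"
      by auto
    have "above_secant (t u) (t v) p = 0"
      using above_secant_nonneg[OF assms(2) p(1) R_sign] above_secant_nonpos[OF assms(3) p(2) R'_sign]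
      by linarith
    then have "p \<in> cnv t (R \<inter> {u, v}) \<inter> cnv t (R' \<inter> {u, v})"
      using mem_cnv_Int_pair_if_above_secant_eq_0[OF uvn assms(2) p(1)]
        mem_cnv_Int_pair_if_above_secant_eq_0[OF uvn assms(3) p(2)] R_sign R'_sign
      by blast
    also have "\<dots> = cnv t (R \<inter> {u, v} \<inter> (R' \<inter> {u, v}))"
    proof (rule cnv_Int)
      have "card (R \<inter> {u, v} \<union> R' \<inter> {u, v}) \<le> card {u, v}"
        by (rule card_mono) auto
      then show "card (R \<inter> {u, v} \<union> R' \<inter> {u, v}) \<le> 3"
        using uv(2) by simp
    qed (use uvn in auto)
    also have "\<dots> \<subseteq> cnv t (R \<inter> R')"
      by (rule cnv_mono) blast
    finally show "p \<in> cnv t (R \<inter> R')" .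
  qed
  then show ?thesis
    unfolding overlap_iff by blast
qed

lemma cnv_subset_split_by_chord:
  assumes V: "V \<subseteq> {1..n}" "u \<in> V" "v \<in> V" "u < v"
  shows "cnv t V \<subseteq> cnv t {k\<in>V. u \<le> k \<and> k \<le> v} \<union> cnv t {k\<in>V. k \<le> u \<or> v \<le> k}"
proof
  fix p
  assume p: "p \<in> cnv t V"
  define A B where "A = {k\<in>V. u \<le> k \<and> k \<le> v}" and "B = {k\<in>V. k \<le> u \<or> v \<le> k}"
  have uvn: "u \<in> {1..n}" "v \<in> {1..n}"
    using V by auto
  have AB: "A \<subseteq> V" "B \<subseteq> V" "A \<subseteq> {1..n}" "B \<subseteq> {1..n}" "{u, v} \<subseteq> A" "{u, v} \<subseteq> B"
    using V by (auto simp: A_def B_def)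
  have A_sign: "\<forall>k\<in>A. (t k - t u) * (t k - t v) \<le> 0"
    using secant_factor_nonpos[OF uvn] AB(3) by (auto simp: A_def)
  have B_sign: "\<forall>k\<in>B. 0 \<le> (t k - t u) * (t k - t v)"
    using secant_factor_nonneg[OF uvn] AB(4) V(4) by (auto simp: B_def)
  have V_eq: "V = A \<union> B"
    by (auto simp: A_def B_def)
  have "cnv t V = convex hull (cnv t A \<union> cnv t B)"
    unfolding cnv_def V_eq image_Un by (rule hull_Un) (simp add: convex_Inter)
  moreover have "cnv t A \<noteq> {}" "cnv t B \<noteq> {}"
    using AB(5,6) by (auto simp: cnv_def dest!: hull_inc[of _ _ convex])
  ultimately obtain y x where y: "y \<in> cnv t A" and x: "x \<in> cnv t B" and seg: "p \<in> closed_segment y x"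
    using mem_convex_hull_Un_closed_segment[OF convex_cnv convex_cnv] p by metis
  let ?f = "above_secant (t u) (t v)"
  have fy: "?f y \<le> 0"
    by (rule above_secant_nonpos[OF AB(3) y A_sign])
  have fx: "0 \<le> ?f x"
    by (rule above_secant_nonneg[OF AB(4) x B_sign])
  have "closed_segment y x \<subseteq> cnv t V"
    using y x cnv_mono[OF AB(1), of t] cnv_mono[OF AB(2), of t] by (intro closed_segment_subset convex_cnv) auto
  then have zeros: "z \<in> cnv t A \<and> z \<in> cnv t B" if "z \<in> closed_segment y x" "?f z = 0" for z
    using mem_cnv_pair_if_above_secant_eq_0[OF uvn V(4) V(1) _ that(2)] that(1)
      cnv_mono[OF AB(5), of t] cnv_mono[OF AB(6), of t] by blast
  show "p \<in> cnv t A \<union> cnv t B"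
  proof (cases "?f p \<le> 0")
    case True
    have "p \<in> cnv t A"
    proof (rule mem_convex_if_affine_nonpos[OF above_secant_affine convex_cnv y fy fx _ seg True])
      show "z \<in> cnv t A" if "z \<in> closed_segment y x" "?f z = 0" for z
        using zeros[OF that] by blast
    qed
    then show ?thesis ..
  next
    case False
    have "p \<in> cnv t B"
    proof (rule mem_convex_if_affine_nonpos[where f = "\<lambda>z. - ?f z", OF _ convex_cnv x])
      show "- ?f (a *\<^sub>R z + b *\<^sub>R w) = a * - ?f z + b * - ?f w" if "a + b = 1" for a b z w
        using above_secant_affine[OF that] by simp
      show "p \<in> closed_segment x y"
        using seg by (simp add: closed_segment_commute)
      show "z \<in> cnv t B" if "z \<in> closed_segment x y" "- ?f z = 0" for z
        using zeros[of z] that by (simp add: closed_segment_commute)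
    qed (use fx fy False in auto)
    then show ?thesis ..
  qed
qed

lemma cnv_subset_Union_fan:
  assumes "1 \<le> u" "u < v" "v < m" "m \<le> n"
  shows "cnv t ({u..v} \<union> {m}) \<subseteq> \<Union> (cnv t ` fan u v m)"
  using assms
proof (induction "v - u" arbitrary: u)
  case 0
  then show ?case by simp
next
  case (Suc d)
  show ?case
  proof (cases "v = Suc u")
    case True
    then have "{u..v} \<union> {m} = {u, Suc u, m}" "{u, Suc u, m} \<in> fan u v m"
      unfolding fan_def by auto
    then show ?thesis by auto
  next
    case False
    let ?V = "{u..v} \<union> {m}"
    have "{k\<in>?V. Suc u \<le> k \<and> k \<le> m} = {Suc u..v} \<union> {m}"
      and "{k\<in>?V. k \<le> Suc u \<or> m \<le> k} = {u, Suc u, m}"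
      using Suc.prems False by auto
    then have "cnv t ?V \<subseteq> cnv t ({Suc u..v} \<union> {m}) \<union> cnv t {u, Suc u, m}"
      using cnv_subset_split_by_chord[of ?V "Suc u" m] Suc.prems False by auto
    also have "\<dots> \<subseteq> \<Union> (cnv t ` fan u v m)"
    proof -
      have "cnv t ({Suc u..v} \<union> {m}) \<subseteq> \<Union> (cnv t ` fan (Suc u) v m)"
        using Suc.hyps(1)[of "Suc u"] Suc.hyps(2) Suc.prems False by auto
      moreover have "fan (Suc u) v m \<subseteq> fan u v m" "{u, Suc u, m} \<in> fan u v m"
        unfolding fan_def using Suc.prems False by auto
      ultimately show ?thesis
        by blast
    qed
    finally show ?thesis .
  qed
qed

lemma cnv_subset_by_chord_split:
  assumes "V \<subseteq> {1..n}" "u \<in> V" "v \<in> V" "u < v"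
    and "cnv t {k\<in>V. u \<le> k \<and> k \<le> v} \<subseteq> U" "cnv t {k\<in>V. k \<le> u \<or> v \<le> k} \<subseteq> U"
  shows "cnv t V \<subseteq> U"
  using cnv_subset_split_by_chord[OF assms(1-4)] assms(5,6) by blast

lemma cnv_subset_Union_of_fan:
  assumes X: "X \<subseteq> {u..v} \<union> {m}" and uvm: "1 \<le> u" "u \<le> v" "v < m" "m \<le> n"
    and T: "fan u v m \<subseteq> T" "{u, m} \<subseteq> \<rho>" "\<rho> \<in> T"
  shows "cnv t X \<subseteq> \<Union> (cnv t ` T)"
proof (cases "u = v")
  case True
  then show ?thesis
    using X T(2) by (intro cnv_subset_Union_of_subset[OF _ T(3)]) auto
next
  case False
  then have "cnv t X \<subseteq> \<Union> (cnv t ` fan u v m)"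
    using cnv_mono[OF X, of t] cnv_subset_Union_fan[of u v m] uvm by simp
  then show ?thesis
    using T(1) by blast
qed

lemma cnv_subset_Union_fan_triangulation_inner:
  assumes abc: "1 \<le> a" "a < b" "b < c" "c \<le> n"
  shows "cnv t {a..c} \<subseteq> \<Union> (cnv t ` fan_triangulation n a b c)"
proof -
  let ?T = "fan_triangulation n a b c"
  have abc_mem: "{a, b, c} \<in> ?T" and fans: "fan a (b - 1) b \<subseteq> ?T" "fan b (c - 1) c \<subseteq> ?T"
    by (auto simp: fan_triangulation_def inner_triangles_def)
  show ?thesis
  proof (rule cnv_subset_by_chord_split[of _ a b])
    show "cnv t {k \<in> {a..c}. a \<le> k \<and> k \<le> b} \<subseteq> \<Union> (cnv t ` ?T)"
      by (rule cnv_subset_Union_of_fan[OF _ _ _ _ _ fans(1) _ abc_mem]) (use abc in auto)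
    show "cnv t {k \<in> {a..c}. k \<le> a \<or> b \<le> k} \<subseteq> \<Union> (cnv t ` ?T)"
    proof (rule cnv_subset_by_chord_split[of _ b c])
      show "cnv t {k \<in> {k \<in> {a..c}. k \<le> a \<or> b \<le> k}. b \<le> k \<and> k \<le> c} \<subseteq> \<Union> (cnv t ` ?T)"
        by (rule cnv_subset_Union_of_fan[OF _ _ _ _ _ fans(2) _ abc_mem]) (use abc in auto)
      show "cnv t {k \<in> {k \<in> {a..c}. k \<le> a \<or> b \<le> k}. k \<le> b \<or> c \<le> k} \<subseteq> \<Union> (cnv t ` ?T)"
        by (rule cnv_subset_Union_of_subset[OF _ abc_mem]) auto
    qed (use abc in auto)
  qed (use abc in auto)
qed

lemma cnv_subset_Union_fan_triangulation_outer:
  assumes abc: "1 \<le> a" "a < b" "b < c" "c \<le> n"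
  shows "cnv t ({1..a} \<union> {c..n}) \<subseteq> \<Union> (cnv t ` fan_triangulation n a b c)"
proof -
  let ?T = "fan_triangulation n a b c"
  have abc_mem: "{a, b, c} \<in> ?T" and acn_mem: "c < n \<Longrightarrow> {a, c, n} \<in> ?T"
    and fans: "fan 1 a n \<subseteq> ?T" "fan c (n - 1) n \<subseteq> ?T"
    by (auto simp: fan_triangulation_def inner_triangles_def outer_triangles_def)
  obtain \<rho> where \<rho>: "{1, n} \<subseteq> \<rho>" "\<rho> \<in> ?T"
  proof (cases "a = 1")
    case True
    then show ?thesis
      using that[OF _ abc_mem] that[OF _ acn_mem] abc(4) by (cases "c < n") auto
  next
    case False
    then have "{1, Suc 1, n} \<in> fan 1 a n"
      using abc(1) unfolding mem_fan_iff by auto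
    then have "{1, Suc 1, n} \<in> ?T"
      using fans(1) by blast
    then show ?thesis
      using that by blast
  qed
  show ?thesis
  proof (rule cnv_subset_by_chord_split[of _ a n])
    show "cnv t {k \<in> {1..a} \<union> {c..n}. k \<le> a \<or> n \<le> k} \<subseteq> \<Union> (cnv t ` ?T)"
      by (rule cnv_subset_Union_of_fan[OF _ _ _ _ _ fans(1) \<rho>]) (use abc in auto)
    show "cnv t {k \<in> {1..a} \<union> {c..n}. a \<le> k \<and> k \<le> n} \<subseteq> \<Union> (cnv t ` ?T)"
    proof (cases "c < n")
      case False
      then show ?thesis
        by (intro cnv_subset_Union_of_subset[OF _ abc_mem]) auto
    next
      case True
      show ?thesis
      proof (rule cnv_subset_by_chord_split[of _ c n])
        show "cnv t {k \<in> {k \<in> {1..a} \<union> {c..n}. a \<le> k \<and> k \<le> n}. c \<le> k \<and> k \<le> n} \<subseteq> \<Union> (cnv t ` ?T)"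
          by (rule cnv_subset_Union_of_fan[OF _ _ _ _ _ fans(2) _ acn_mem[OF True]]) (use abc True in auto)
        show "cnv t {k \<in> {k \<in> {1..a} \<union> {c..n}. a \<le> k \<and> k \<le> n}. k \<le> c \<or> n \<le> k} \<subseteq> \<Union> (cnv t ` ?T)"
          by (rule cnv_subset_Union_of_subset[OF _ acn_mem[OF True]]) auto
      qed (use abc True in auto)
    qed
  qed (use abc in auto)
qed

lemma cnv_subset_Union_fan_triangulation:
  assumes abc: "1 \<le> a" "a < b" "b < c" "c \<le> n"
  shows "cnv t {1..n} \<subseteq> \<Union> (cnv t ` fan_triangulation n a b c)"
proof (rule cnv_subset_by_chord_split[of _ a c])
  show "cnv t {k \<in> {1..n}. a \<le> k \<and> k \<le> c} \<subseteq> \<Union> (cnv t ` fan_triangulation n a b c)"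
  proof -
    have "{k \<in> {1..n}. a \<le> k \<and> k \<le> c} = {a..c}"
      using abc by auto
    then show ?thesis
      using cnv_subset_Union_fan_triangulation_inner[OF abc] by simp
  qed
  show "cnv t {k \<in> {1..n}. k \<le> a \<or> c \<le> k} \<subseteq> \<Union> (cnv t ` fan_triangulation n a b c)"
  proof -
    have "{k \<in> {1..n}. k \<le> a \<or> c \<le> k} = {1..a} \<union> {c..n}"
      using abc by auto
    then show ?thesis
      using cnv_subset_Union_fan_triangulation_outer[OF abc] by simp
  qed
qed (use abc in auto)

lemma triangulation_fan_triangulation:
  assumes abc: "1 \<le> a" "a < b" "b < c" "c \<le> n"
  shows "triangulation n t (fan_triangulation n a b c)"
proof -
  let ?T = "fan_triangulation n a b c"
  have "\<not> overlap t R R'" if R: "R \<in> ?T" "R' \<in> ?T" "R \<noteq> R'" for R R'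
  proof -
    have "R \<subseteq> {1..n}" "R' \<subseteq> {1..n}"
      using fan_triangulation_subset_card(1)[OF abc] R(1,2) by blast+
    then show ?thesis
      using fan_triangulation_chord_separated[OF abc R] not_overlap_if_chord_separated
        overlap_commute by blast
  qed
  moreover have "(\<Union>\<rho>\<in>?T. cnv t \<rho>) = cnv t {1..n}"
    using cnv_subset_Union_fan_triangulation[OF abc] cnv_mono[of _ "{1..n}" t]
      fan_triangulation_subset_card(1)[OF abc] by blast
  ultimately show ?thesis
    unfolding triangulation_def using fan_triangulation_subset_card[OF abc] by blast
qed

text \<open>r is where the edge {b, d} crosses the edge {a, c}. Against the cubic with roots
  t a, t c, t d the vertex b is positive while a and c vanish, so {b, d} lies strictly above
  {a, c} at r.\<close>
lemma crossing_point_above: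
  assumes abcd: "{a, b, c, d} \<subseteq> {1..n}" "a < b" "b < c" "c < d"
  obtains r where "r \<in> cnv t {b, d}" "r \<in> cnv t {a, c}" "height t {a, c} r < height t {b, d} r"
proof -
  have ac: "{a, c} \<subseteq> {1..n}" "card {a, c} \<le> 3" and bd: "{b, d} \<subseteq> {1..n}" "card {b, d} \<le> 3"
    using abcd by (auto simp: card_insert_if)
  define A B C D where "A = t a" and "B = t b" and "C = t c" and "D = t d"
  have ABCD: "A < B" "B < C" "C < D"
    using strict_mono_onD[OF mono] abcd by (auto simp: A_def B_def C_def D_def)
  define P where "P s = (s - A) * (s - C) * (s - D)" for s
  define qb qd where "qb = (B - A) * (B - C)" and "qd = (D - A) * (D - C)"
  have q: "qb < 0" "0 < qd"
    using ABCD by (auto simp: qb_def qd_def mult_pos_neg)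
  define \<alpha> where "\<alpha> = qd / (qd - qb)"
  have \<alpha>: "0 < \<alpha>" "\<alpha> < 1"
    using q by (auto simp: \<alpha>_def field_simps)
  define r where "r = (\<alpha> * B + (1 - \<alpha>) * D, \<alpha> * B ^ 2 + (1 - \<alpha>) * D ^ 2)"
  define l where "l k = (if k = b then \<alpha> else 1 - \<alpha>)" for k
  have l: "bary_weights t {b, d} l r"
    using abcd \<alpha> by (auto simp: bary_weights_def l_def r_def B_def D_def)
  then have r_bd: "r \<in> cnv t {b, d}"
    using mem_cnv_iff[OF bd(1)] by blast
  have "above_secant A C r = \<alpha> * qb + (1 - \<alpha>) * qd"
    using abcd by (simp add: bary_weights_above_secant[OF l] l_def qb_def qd_def B_def D_def)
  also have "\<dots> = 0"
    using q by (simp add: \<alpha>_def field_simps)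
  finally have r_ac: "r \<in> cnv t {a, c}"
    using mem_cnv_pair_if_above_secant_eq_0[OF _ _ _ bd(1) r_bd] ac(1) abcd by (simp add: A_def C_def)
  then obtain m where m: "bary_weights t {a, c} m r"
    using mem_cnv_iff[OF ac(1)] by blast
  define L where "L = (A + C + D) * snd r - (A * C + C * D + D * A) * fst r + A * C * D"
  have "height t {b, d} r = \<alpha> * P B + L"
    using height_eq_sum[OF bd l] bary_weights_cube[OF l, of A C D] abcd
    by (simp add: L_def P_def l_def B_def D_def)
  moreover have "height t {a, c} r = L"
    using height_eq_sum[OF ac m] bary_weights_cube[OF m, of A C D] abcd
    by (simp add: L_def A_def C_def)
  moreover have "0 < \<alpha> * P B"
    using \<alpha> q ABCD by (simp add: P_def qb_def [symmetric] mult_neg_neg)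
  ultimately show ?thesis
    using that r_bd r_ac by simp
qed

lemma interlaces_imp_overlap_not_below3:
  assumes \<sigma>: "\<sigma> \<subseteq> {1..n}" "card \<sigma> \<le> 3" and \<tau>: "\<tau> \<subseteq> {1..n}" "card \<tau> \<le> 3"
    and "interlaces \<sigma> \<tau>"
  shows "overlap t \<tau> \<sigma> \<and> \<not> below3 t \<tau> \<sigma>"
proof -
  obtain a c b d where ac: "{a, c} \<subseteq> \<sigma>" and bd: "{b, d} \<subseteq> \<tau>" and ord: "a < b" "b < c" "c < d"
    using assms(5) unfolding interlaces_def by blast
  have "{a, b, c, d} \<subseteq> {1..n}"
    using ac bd \<sigma> \<tau> by auto
  then obtain r where r: "r \<in> cnv t {b, d}" "r \<in> cnv t {a, c}" "height t {a, c} r < height t {b, d} r"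
    using crossing_point_above ord by blast
  have r_mem: "r \<in> cnv t \<tau>" "r \<in> cnv t \<sigma>"
    using r cnv_mono[OF bd, of t] cnv_mono[OF ac, of t] by auto
  have r_above: "height t \<sigma> r < height t \<tau> r"
    using height_face[OF bd \<tau> r(1)] height_face[OF ac \<sigma> r(2)] r(3) by simp
  have "r \<notin> cnv t (\<tau> \<inter> \<sigma>)"
  proof
    assume r: "r \<in> cnv t (\<tau> \<inter> \<sigma>)"
    have "height t \<tau> r = height t (\<tau> \<inter> \<sigma>) r" "height t \<sigma> r = height t (\<tau> \<inter> \<sigma>) r"
      using height_face[OF _ \<tau> r] height_face[OF _ \<sigma> r] by auto
    then show False
      using r_above by simp
  qed
  then have "overlap t \<tau> \<sigma>"
    unfolding overlap_iff using r_mem by blast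
  moreover have "\<not> below3 t \<tau> \<sigma>"
    unfolding below3_def using r_mem r_above by force
  ultimately show ?thesis ..
qed

lemma height_le_if_not_interlaces:
  assumes xyz: "x < y" "y < z" "{x, y, z} \<subseteq> {1..n}" and \<tau>: "\<tau> \<subseteq> {1..n}" "card \<tau> \<le> 3"
    and not_int: "\<not> interlaces {x, y, z} \<tau>" and p: "p \<in> cnv t \<tau>" "p \<in> cnv t {x, y, z}"
  shows "height t \<tau> p \<le> height t {x, y, z} p"
proof -
  have \<rho>: "{x, y, z} \<subseteq> {1..n}" "card {x, y, z} \<le> 3"
    using xyz by (auto simp: card_insert_if)
  note cubic = height_le_if_cubic_sign[OF \<tau> \<rho> p]
  have le: "t k \<le> t j" if "k \<in> \<tau>" "j \<in> {x, y, z, n}" "k \<le> j" for k j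
    using strict_mono_on_leD[OF mono] that \<tau>(1) xyz(3) by auto
  have ge: "t j \<le> t k" if "k \<in> \<tau>" "j \<in> {x, y, z}" "j \<le> k" for k j
    using strict_mono_on_leD[OF mono] that \<tau>(1) xyz(3) by auto
  have lt: "t x < t y" "t y < t z" "t z \<le> t n"
    using strict_mono_onD[OF mono] strict_mono_on_leD[OF mono] xyz by auto
  from xyz(1,2) not_int show ?thesis
  proof (cases rule: not_interlaces_triangle_cases)
    case left
    then have "\<forall>k\<in>\<tau>. t k \<le> t y"
      using le by blast
    then show ?thesis
      using lt by (intro cubic[of "t x" "t x" "t y"]) (auto simp: mult_nonneg_nonpos)
  next
    case outside
    then have "\<forall>k\<in>\<tau>. (t k \<le> t x \<or> t z \<le> t k) \<and> t k \<le> t n"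
      using le ge \<tau>(1) by (meson atLeastAtMost_iff insertCI subsetD)
    then show ?thesis
      using lt by (intro cubic[of "t x" "t z" "t n"]) (auto simp: mult_le_0_iff zero_le_mult_iff)
  next
    case middle
    then have "\<forall>k\<in>\<tau>. t k \<le> t x \<or> t y \<le> t k \<and> t k \<le> t z"
      using le ge by (meson insertCI)
    then show ?thesis
      using lt by (intro cubic[of "t x" "t y" "t z"]) (auto simp: mult_le_0_iff zero_le_mult_iff)
  qed
qed

lemma below3_T_fan_triangulation:
  assumes abc: "1 \<le> a" "a < b" "b < c" "c \<le> n" and \<tau>: "\<tau> \<subseteq> {1..n}" "card \<tau> \<le> 3"
    and "\<not> interlaces {a, b, c} \<tau>"
  shows "below3_T t \<tau> (fan_triangulation n a b c)"
  unfolding below3_T_def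
proof (intro ballI impI)
  fix p R
  assume p: "p \<in> cnv t \<tau>" and R: "R \<in> fan_triangulation n a b c" and pR: "p \<in> cnv t R"
  obtain x y z where xyz: "x < y" "y < z" "R = {x, y, z}"
    using card_3_sorted fan_triangulation_subset_card(2)[OF abc R] by blast
  have "\<not> interlaces R \<tau>"
    using interlaces_of_mem_fan_triangulation[OF R abc(2,3) \<tau>(1)] assms(7) by blast
  then show "height t \<tau> p \<le> height t R p"
    using height_le_if_not_interlaces[OF xyz(1,2) _ \<tau>] fan_triangulation_subset_card(1)[OF abc R] p pR xyz(3)
    by simp
qed

end

theorem theorem3p1:
  fixes n :: nat and t :: "nat \<Rightarrow> real" and \<sigma> :: "nat set"
  assumes "3 \<le> n"
    and "strict_mono_on {1..n} t"
    and "edge_or_triangle n \<sigma>"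
  shows "\<exists>T. triangulation n t T \<and> in_triang \<sigma> T \<and>
           (\<forall>\<tau>. edge_or_triangle n \<tau> \<and> \<tau> \<noteq> \<sigma> \<and>
                 (\<not> overlap t \<tau> \<sigma> \<or> below3 t \<tau> \<sigma>) \<longrightarrow> below3_T t \<tau> T)"
proof -
  obtain a b c where abc: "1 \<le> a" "a < b" "b < c" "c \<le> n" and \<sigma>_abc: "\<sigma> \<subseteq> {a, b, c}"
    and interlaces_\<sigma>: "\<And>\<tau>. \<tau> \<subseteq> {1..n} \<Longrightarrow> interlaces {a, b, c} \<tau> \<Longrightarrow> interlaces \<sigma> \<tau>"
    using edge_or_triangle_in_triangle[OF assms(1,3)] by blast
  have \<sigma>: "\<sigma> \<subseteq> {1..n}" "card \<sigma> \<le> 3"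
    using assms(3) by (auto simp: edge_or_triangle_def)
  show ?thesis
  proof (intro exI conjI allI impI)
    show "triangulation n t (fan_triangulation n a b c)"
      by (rule triangulation_fan_triangulation[OF assms(2) abc])
    show "in_triang \<sigma> (fan_triangulation n a b c)"
      using \<sigma>_abc by (auto simp: in_triang_def fan_triangulation_def inner_triangles_def)
    fix \<tau>
    assume hyp: "edge_or_triangle n \<tau> \<and> \<tau> \<noteq> \<sigma> \<and> (\<not> overlap t \<tau> \<sigma> \<or> below3 t \<tau> \<sigma>)"
    then have \<tau>: "\<tau> \<subseteq> {1..n}" "card \<tau> \<le> 3"
      by (auto simp: edge_or_triangle_def)
    then have "\<not> interlaces {a, b, c} \<tau>"
      using interlaces_imp_overlap_not_below3[OF assms(2) \<sigma> \<tau>] interlaces_\<sigma> hyp by blast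
    then show "below3_T t \<tau> (fan_triangulation n a b c)"
      by (rule below3_T_fan_triangulation[OF assms(2) abc \<tau>])
  qed
qed

end
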